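(* Let $\alpha=m+n\gamma^{-1}\in\mathbb{Z}[\gamma]$ ($m,n\in\mathbb{Z}$) with $\alpha>0$, and let $Q_\alpha$ be the set of quads representing $\alpha$. Then $Q_\alpha$ is infinite and its elements have pairwise distinct sizes. Listing its elements in order of increasing size, the sizes form a sequence of consecutive integers, while the degrees, the bi-degrees (for the componentwise partial order on $\mathbb{N}^2$) and the second partial degrees are strictly increasing. The element of $Q_\alpha$ of smallest size has degree $|m|+|n|$ and bi-degree $(|m|,|n|)$.
   Context: Let $f\colon\mathbb{Z}\to\mathbb{Z}$ be defined by $f(0)=f(1)=1$, $f(i+2)=f(i+1)+f(i)$ for all $i\in\mathbb{Z}$; $\gamma=(1+\sqrt5)/2$; $\mathbb{Z}[\gamma]=\mathbb{Z}\oplus\mathbb{Z}\gamma^{-1}$. A quad is a tuple $q=(i;a,b,c)$ of non-negative integers with $a\ge1$. It represents $\alpha\in\mathbb{Z}[\gamma]$ if $\alpha=a\gamma^{-i}+b\gamma^{-i-1}+c\gamma^{-i-2}$. Its first and second partial degrees are $d_1(q)=af(i-2)+bf(i-1)+cf(i)$ and $d_2(q)=af(i-1)+bf(i)+cf(i+1)$, its degree is $d(q)=d_1(q)+d_2(q)$, its bi-degree is $(d_1(q),d_2(q))$, and its size is $a+b+c$. *)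

theory Defs
  imports Complex_Main "HOL-Number_Theory.Fib"
begin

text \<open>The Fibonacci-type function f on the integers with f 0 = f 1 = 1 and
  f (i+2) = f (i+1) + f i for all integers i, given explicitly
  (f i = fib (i+1) for i \<ge> 0, and f (-k) = (-1)^k * fib (k-1) for k \<ge> 1).\<close>

definition f :: "int \<Rightarrow> int" where
  "f i = (if i \<ge> 0 then int (fib (nat i + 1))
          else (-1) ^ nat (- i) * int (fib (nat (- i) - 1)))"

lemma f_0: "f 0 = 1" and f_1: "f 1 = 1"
  by (simp_all add: f_def)

lemma f_rec: "f (i + 2) = f (i + 1) + f i"
proof (cases "i \<ge> 0")
  case True
  then obtain n where n: "i = int n" by (metis nonneg_eq_int)
  have "nat (int n + 2) + 1 = Suc (Suc (n + 1))" by simp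
  moreover have "nat (int n + 1) + 1 = Suc (n + 1)" by simp
  ultimately show ?thesis using n by (simp add: f_def)
next
  case False
  define k where "k = nat (- i)"
  have k: "i = - int k" "k \<ge> 1" using False unfolding k_def by auto
  consider "k = 1" | "k = 2" | "k \<ge> 3" using k(2) by linarith
  then show ?thesis
  proof cases
    case 1 then show ?thesis using k by (simp add: f_def)
  next
    case 2 then show ?thesis using k by (simp add: f_def)
  next
    case 3
    then obtain j where j: "k = j + 3" by (metis add.commute le_Suc_ex)
    have e1: "i + 2 = - int (Suc j)" using k j by simp
    have e2: "i + 1 = - int (Suc (Suc j))" using k j by simp
    have e3: "i = - int (Suc (Suc (Suc j)))" using k j by simp
    have r: "fib (Suc (Suc j)) = fib (Suc j) + fib j" by simp
    have n1: "nat (int j + 1) = Suc j" by simp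
    have n2: "nat (int j + 2) = Suc (Suc j)" by simp
    have n3: "nat (int j + 3) = Suc (Suc (Suc j))" by simp
    have "f i = (-1) ^ j * - int (fib (Suc (Suc j)))"
      unfolding e3 f_def using n3 by (simp del: fib.simps)
    moreover have "f (i + 1) = (-1) ^ j * int (fib (Suc j))"
      unfolding e2 f_def using n2 by (simp del: fib.simps)
    moreover have "f (i + 2) = (-1) ^ j * - int (fib j)"
      unfolding e1 f_def using n1 by (simp del: fib.simps)
    ultimately show ?thesis using r by (simp add: algebra_simps)
  qed
qed

definition gamma :: real where "gamma = (1 + sqrt 5) / 2"

type_synonym quad = "nat \<times> nat \<times> nat \<times> nat"

definition is_quad :: "quad \<Rightarrow> bool" where
  "is_quad q = (case q of (i, a, b, c) \<Rightarrow> a \<ge> 1)"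

definition represents :: "quad \<Rightarrow> real \<Rightarrow> bool" where
  "represents q \<alpha> = (case q of (i, a, b, c) \<Rightarrow>
     \<alpha> = real a * gamma powi (- int i) + real b * gamma powi (- int i - 1)
         + real c * gamma powi (- int i - 2))"

definition Q :: "real \<Rightarrow> quad set" where
  "Q \<alpha> = {q. is_quad q \<and> represents q \<alpha>}"

definition d1 :: "quad \<Rightarrow> int" where
  "d1 q = (case q of (i, a, b, c) \<Rightarrow>
     int a * f (int i - 2) + int b * f (int i - 1) + int c * f (int i))"

definition d2 :: "quad \<Rightarrow> int" where
  "d2 q = (case q of (i, a, b, c) \<Rightarrow>
     int a * f (int i - 1) + int b * f (int i) + int c * f (int i + 1))"

definition deg :: "quad \<Rightarrow> int" where
  "deg q = d1 q + d2 q"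

definition qsize :: "quad \<Rightarrow> nat" where
  "qsize q = (case q of (i, a, b, c) \<Rightarrow> a + b + c)"

end

theory Submission
  imports Defs "HOL-Computational_Algebra.Primes"
begin

(* Write x = 1/gamma = gamma - 1, so x^2 = 1 - x and x^i = x^(i+1) + x^(i+2).
   Expanding alpha = m + n x at "level" i gives alpha = A_i x^i + B_i x^(i+1) with integers
   A_i = m f(i) + n f(i-1), B_i = m f(i-1) + n f(i-2).  Since x is irrational, a quad
   (i;a,b,c) represents alpha iff a + c = A_i and b - c = B_i (lemma Q_iff).
   On Q_alpha we define a successor map succ: (i;a,b,c) -> (i;a-1,b+1,c+1) if a >= 2 and
   (i;1,b,c) -> (i+1;b+1,c+1,0).  It stays in Q_alpha, raises the size by one, does not
   decrease d1 and raises d2 by 2 f(i) >= 2.  Q_alpha is nonempty because A_i > 0 for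
   large i (the conjugate term shrinks like x^(2i)); following predecessors from any element
   ends at a "base" quad (b = 0, or i = c = 0), and the base quad is unique.  Hence Q_alpha is
   the orbit of its base quad q0 under succ, which gives all claims about sizes and degrees;
   finally, computing x^i in terms of f shows that the base quad has bi-degree (|m|,|n|). *)

section \<open>The golden ratio and its inverse\<close>

definition ginv :: real where "ginv = gamma - 1"

lemma sqrt5_bounds: "2 < sqrt (5::real)" "sqrt (5::real) < 3"
  by (rule real_less_rsqrt, simp) (rule real_less_lsqrt, simp_all)

lemma gamma_gt1: "gamma > 1"
  using sqrt5_bounds unfolding gamma_def by simp

lemma ginv_gamma: "ginv * gamma = 1"
  unfolding ginv_def gamma_def by (simp add: algebra_simps)

lemma ginv_pos: "0 < ginv" and ginv_lt1: "ginv < 1"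
  using sqrt5_bounds unfolding ginv_def gamma_def by simp_all

lemma inverse_gamma: "inverse gamma = ginv"
  using ginv_gamma gamma_gt1 by (simp add: field_simps)

lemma ginv_power_rec: "ginv ^ i = ginv ^ Suc i + ginv ^ Suc (Suc i)"
proof -
  have "gamma\<^sup>2 = gamma + 1"
    unfolding gamma_def by (simp add: power2_eq_square algebra_simps)
  then have "ginv + ginv\<^sup>2 = 1"
    unfolding ginv_def by (simp add: power2_eq_square algebra_simps)
  then have "ginv ^ i * (ginv + ginv\<^sup>2) = ginv ^ i" by simp
  then show ?thesis by (simp add: power2_eq_square algebra_simps)
qed

lemma gamma_powi_neg: "gamma powi (- int i) = ginv ^ i"
  by (simp add: power_int_minus inverse_gamma[symmetric] power_inverse)

lemma represents_iff:
  "represents (i, a, b, c) \<alpha> \<longleftrightarrow>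
     \<alpha> = real a * ginv ^ i + real b * ginv ^ Suc i + real c * ginv ^ Suc (Suc i)"
proof -
  have "- int i - 1 = - int (Suc i)" "- int i - 2 = - int (Suc (Suc i))" by simp_all
  then show ?thesis unfolding represents_def by (simp only: gamma_powi_neg prod.case)
qed

text \<open>sqrt 5 is irrational, in the integral form needed below.\<close>
lemma square_eq_5_times_square: "(s::int)\<^sup>2 = 5 * k\<^sup>2 \<Longrightarrow> k = 0"
proof (induction "nat \<bar>k\<bar>" arbitrary: s k rule: less_induct)
  case less
  have five_dvd: "(5::int) dvd t" if "t\<^sup>2 = 5 * u" for t u
    using that prime_dvd_power[of "5::int" t 2] by simp
  obtain t where t: "s = 5 * t" using five_dvd[OF less.prems] by blast
  then have kt: "k\<^sup>2 = 5 * t\<^sup>2" using less.prems by (simp add: power2_eq_square)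
  obtain u where u: "k = 5 * u" using five_dvd[OF kt] by blast
  have "t\<^sup>2 = 5 * u\<^sup>2" using kt u by (simp add: power2_eq_square)
  then show "k = 0" using less.hyps[of u t] u by fastforce
qed

lemma Zgamma_coords_unique:
  fixes a b c d :: int
  assumes "real_of_int a + of_int b * ginv = of_int c + of_int d * ginv"
  shows "a = c \<and> b = d"
proof -
  define k r where "k = b - d" and "r = c - a"
  have "of_int k * ginv = of_int r"
    using assms unfolding k_def r_def by (simp add: algebra_simps)
  then have "of_int k * sqrt 5 = of_int (2 * r + k)"
    unfolding ginv_def gamma_def by (simp add: algebra_simps)
  moreover have "(of_int k * sqrt 5)\<^sup>2 = real_of_int (5 * k\<^sup>2)"
    by (simp add: power_mult_distrib)
  ultimately have "real_of_int ((2 * r + k)\<^sup>2) = of_int (5 * k\<^sup>2)" by simp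
  then have "k = 0" by (intro square_eq_5_times_square[of "2 * r + k"]) (simp only: of_int_eq_iff)
  then show ?thesis using assms unfolding k_def by simp
qed

section \<open>The Fibonacci function f\<close>

lemma f_rec': "f j = f (j - 1) + f (j - 2)"
  using f_rec[of "j - 2"] by simp

lemma f_m1: "f (-1) = 0" and f_m2: "f (-2) = 1"
  by (simp_all add: f_def)

lemma f_pos: "j \<ge> 0 \<Longrightarrow> f j \<ge> 1"
  unfolding f_def using fib_neq_0_nat[of "nat j + 1"] by simp

lemma f_nonneg: "j \<ge> -2 \<Longrightarrow> f j \<ge> 0"
proof -
  assume "j \<ge> -2"
  then have "j \<ge> 0 \<or> j = -1 \<or> j = -2" by auto
  then show ?thesis using f_pos f_m1 f_m2 by fastforce
qed

lemma ginv_power_f: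
  "ginv ^ k = (-1) ^ k * (of_int (f (int k - 2)) - of_int (f (int k - 1)) * ginv)"
proof (induction k rule: nat_less_induct)
  case (1 k)
  consider "k = 0" | "k = 1" | j where "k = Suc (Suc j)" by (metis One_nat_def not0_implies_Suc)
  then show ?case
  proof cases
    case 3
    have e: "int k - 2 = int j" "int k - 1 = int j + 1" using 3 by simp_all
    have rj: "f (int j + 1) = f (int j) + f (int j - 1)" "f (int j) = f (int j - 1) + f (int j - 2)"
      using f_rec'[of "int j + 1"] f_rec'[of "int j"] by simp_all
    have "ginv ^ k = ginv ^ j - ginv ^ Suc j" using ginv_power_rec[of j] unfolding 3 by linarith
    also have "\<dots> = (-1) ^ k * (of_int (f (int j)) - of_int (f (int j + 1)) * ginv)"
      using "1.IH"[rule_format, of j] "1.IH"[rule_format, of "Suc j"] 3 rj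
      by (simp add: algebra_simps)
    finally show ?thesis unfolding e .
  qed (simp_all add: f_0 f_m1 f_m2 f_1)
qed

section \<open>Coordinates of alpha at level i\<close>

text \<open>With x = 1/gamma, alpha = m + n x = A_i x^i + B_i x^(i+1) for the integers below
  (lemma alpha_level).  They satisfy A_(i+1) = A_i + B_i and B_(i+1) = A_i.\<close>
definition coefA :: "int \<Rightarrow> int \<Rightarrow> nat \<Rightarrow> int" where
  "coefA m n i = m * f (int i) + n * f (int i - 1)"

definition coefB :: "int \<Rightarrow> int \<Rightarrow> nat \<Rightarrow> int" where
  "coefB m n i = m * f (int i - 1) + n * f (int i - 2)"

lemma coefA_0: "coefA m n 0 = m" and coefB_0: "coefB m n 0 = n"
  unfolding coefA_def coefB_def by (simp_all add: f_0 f_m1 f_m2)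

lemma coefA_Suc: "coefA m n (Suc i) = coefA m n i + coefB m n i"
proof -
  have "f (int i + 1) = f (int i) + f (int i - 1)" using f_rec'[of "int i + 1"] by simp
  moreover have "f (int i) = f (int i - 1) + f (int i - 2)" by (rule f_rec')
  ultimately show ?thesis unfolding coefA_def coefB_def by (simp add: algebra_simps)
qed

lemma coefB_Suc: "coefB m n (Suc i) = coefA m n i"
  unfolding coefA_def coefB_def by (simp add: algebra_simps)

lemma alpha_level:
  "real_of_int m + of_int n * ginv
     = of_int (coefA m n i) * ginv ^ i + of_int (coefB m n i) * ginv ^ Suc i"
proof (induction i)
  case 0
  then show ?case by (simp add: coefA_0 coefB_0)
next
  case (Suc i)
  have "of_int (coefA m n (Suc i)) * ginv ^ Suc i + of_int (coefB m n (Suc i)) * ginv ^ Suc (Suc i)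
      = of_int (coefA m n i) * (ginv ^ Suc i + ginv ^ Suc (Suc i))
        + of_int (coefB m n i) * ginv ^ Suc i"
    by (simp only: coefA_Suc coefB_Suc of_int_add) (simp add: algebra_simps)
  also have "\<dots> = of_int (coefA m n i) * ginv ^ i + of_int (coefB m n i) * ginv ^ Suc i"
    by (simp only: ginv_power_rec[of i, symmetric])
  finally show ?case using Suc by simp
qed

text \<open>Membership in Q alpha is a linear condition on the quad: the level-i coordinates
  of a x^i + b x^(i+1) + c x^(i+2) are (a + c, b - c).\<close>
lemma Q_iff:
  assumes ax: "\<alpha> = real_of_int m + of_int n * ginv"
  shows "(i, a, b, c) \<in> Q \<alpha> \<longleftrightarrow>
           a \<ge> 1 \<and> int a + int c = coefA m n i \<and> int b - int c = coefB m n i"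
proof -
  define y where "y = ginv ^ i"
  have y0: "y \<noteq> 0" unfolding y_def using ginv_pos by simp
  have "ginv ^ Suc (Suc i) = ginv ^ i - ginv ^ Suc i" using ginv_power_rec[of i] by linarith
  then have s2: "ginv ^ Suc (Suc i) = y * (1 - ginv)" unfolding y_def by (simp add: algebra_simps)
  have "\<alpha> = y * (of_int (coefA m n i) + of_int (coefB m n i) * ginv)"
    using alpha_level[of m n i] ax unfolding y_def by (simp add: algebra_simps)
  moreover have "real a * ginv ^ i + real b * ginv ^ Suc i + real c * ginv ^ Suc (Suc i)
        = y * (of_int (int a + int c) + of_int (int b - int c) * ginv)"
    unfolding s2 by (simp add: y_def algebra_simps)
  ultimately have "represents (i, a, b, c) \<alpha> \<longleftrightarrow>
      of_int (int a + int c) + of_int (int b - int c) * ginv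
        = real_of_int (coefA m n i) + of_int (coefB m n i) * ginv"
    unfolding represents_iff using y0 by auto
  also have "\<dots> \<longleftrightarrow> int a + int c = coefA m n i \<and> int b - int c = coefB m n i"
    using Zgamma_coords_unique[of "int a + int c" "int b - int c" "coefA m n i" "coefB m n i"]
    by (intro iffI) (blast, simp only:)
  finally show ?thesis unfolding Q_def is_quad_def by auto
qed

lemma coefA_stays_pos:
  assumes "coefA m n k \<ge> 1" "coefA m n (Suc k) \<ge> 1"
  shows "coefA m n (k + d) \<ge> 1 \<and> coefA m n (Suc (k + d)) \<ge> 1"
proof (induction d)
  case 0
  then show ?case using assms by simp
next
  case (Suc d)
  then show ?case by (simp add: coefA_Suc[of m n "Suc (k + d)"] coefB_Suc)
qed

text \<open>The conjugate of the level-i coordinates (gamma replaced by -1/gamma) is a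
  multiple of (-x)^i; this is why A_i is eventually positive.\<close>
lemma coefs_conjugate:
  "of_int (coefA m n i) - of_int (coefB m n i) * gamma
     = (- ginv) ^ i * (of_int m - of_int n * gamma)"
proof (induction i)
  case 0
  then show ?case by (simp add: coefA_0 coefB_0)
next
  case (Suc i)
  define A B where "A = real_of_int (coefA m n i)" and "B = real_of_int (coefB m n i)"
  have "(A + B) - A * gamma = - ginv * (A - B * gamma)"
    using ginv_gamma unfolding ginv_def by (simp add: algebra_simps)
  then show ?case using Suc unfolding A_def B_def by (simp add: coefA_Suc coefB_Suc)
qed

lemma coefA_via_conjugate:
  "ginv ^ Suc i * (gamma + ginv) * of_int (coefA m n i)
   = (of_int m + of_int n * ginv)
     + ginv ^ Suc (Suc i) * (of_int (coefA m n i) - of_int (coefB m n i) * gamma)"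
proof -
  define A B y where "A = real_of_int (coefA m n i)" and "B = real_of_int (coefB m n i)"
    and "y = ginv ^ i"
  have "ginv * y * (gamma + ginv) * A - (A * y + B * (ginv * y) + ginv * (ginv * y) * (A - B * gamma))
      = (ginv * gamma - 1) * (A * y + B * ginv * y)" by (simp add: algebra_simps)
  then show ?thesis using alpha_level[of m n i] ginv_gamma
    unfolding A_def[symmetric] B_def[symmetric] y_def[symmetric] by (simp add: y_def)
qed

lemma coefA_pos_if_conjugate_small:
  assumes ax: "\<alpha> = real_of_int m + of_int n * ginv"
    and small: "ginv ^ (2 * i + 2) * \<bar>of_int m - of_int n * gamma\<bar> < \<alpha>"
  shows "coefA m n i \<ge> 1"
proof -
  define t where "t = ginv ^ Suc (Suc i) * (of_int (coefA m n i) - of_int (coefB m n i) * gamma)"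
  have "\<bar>t\<bar> = ginv ^ Suc (Suc i) * ginv ^ i * \<bar>of_int m - of_int n * gamma\<bar>"
    unfolding t_def coefs_conjugate using ginv_pos by (simp add: abs_mult power_abs)
  also have "ginv ^ Suc (Suc i) * ginv ^ i = ginv ^ (2 * i + 2)"
    by (simp add: power_add[symmetric] mult_2)
  finally have "0 < ginv ^ Suc i * (gamma + ginv) * of_int (coefA m n i)"
    using small coefA_via_conjugate[of i m n] ax unfolding t_def by linarith
  moreover have "ginv ^ Suc i * (gamma + ginv) > 0" using ginv_pos gamma_gt1 by simp
  ultimately have "real_of_int (coefA m n i) > 0" by (rule zero_less_mult_pos)
  then show ?thesis by simp
qed

lemma coefA_eventually_pos:
  assumes ax: "\<alpha> = real_of_int m + of_int n * ginv" and pos: "\<alpha> > 0"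
  obtains N where "coefA m n N \<ge> 1" "coefA m n (Suc N) \<ge> 1"
proof -
  define S where "S = \<bar>real_of_int m - of_int n * gamma\<bar>"
  obtain N where "(S + 1) / \<alpha> < gamma ^ N" using real_arch_pow[OF gamma_gt1] by blast
  then have "S + 1 < \<alpha> * gamma ^ N" using pos by (simp add: pos_divide_less_eq mult.commute)
  then have "ginv ^ N * (S + 1) < ginv ^ N * (\<alpha> * gamma ^ N)" using ginv_pos by simp
  also have "\<dots> = \<alpha> * (ginv * gamma) ^ N" by (simp add: power_mult_distrib)
  finally have lt: "ginv ^ N * (S + 1) < \<alpha>" using ginv_gamma by simp
  have small: "ginv ^ (2 * i + 2) * S < \<alpha>" if "N \<le> 2 * i + 2" for i
  proof -
    have "ginv ^ (2 * i + 2) \<le> ginv ^ N"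
      using that ginv_pos ginv_lt1 by (intro power_decreasing) simp_all
    then have "ginv ^ (2 * i + 2) * S \<le> ginv ^ N * S" by (simp add: S_def mult_right_mono)
    also have "\<dots> < ginv ^ N * (S + 1)" using ginv_pos by simp
    finally show ?thesis using lt by simp
  qed
  show ?thesis
    using that[of N] coefA_pos_if_conjugate_small[OF ax] small[of N] small[of "Suc N"]
    unfolding S_def by simp
qed

text \<open>Q alpha is nonempty: at a level N where A_N and A_(N+1) = A_N + B_N are positive,
  one of (N; A_N + B_N, 0, -B_N) and (N; A_N, B_N, 0) is a quad representing alpha.\<close>
lemma Q_nonempty:
  assumes ax: "\<alpha> = real_of_int m + of_int n * ginv" and pos: "\<alpha> > 0"
  shows "Q \<alpha> \<noteq> {}"
proof -
  obtain N where A1: "coefA m n N \<ge> 1" and A2: "coefA m n (Suc N) \<ge> 1"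
    using coefA_eventually_pos[OF ax pos] by blast
  show ?thesis
  proof (cases "coefB m n N \<le> 0")
    case True
    have "(N, nat (coefA m n N + coefB m n N), 0, nat (- coefB m n N)) \<in> Q \<alpha>"
      unfolding Q_iff[OF ax] using True A2 by (simp add: coefA_Suc)
    then show ?thesis by blast
  next
    case False
    have "(N, nat (coefA m n N), nat (coefB m n N), 0) \<in> Q \<alpha>"
      unfolding Q_iff[OF ax] using False A1 by simp
    then show ?thesis by blast
  qed
qed

section \<open>The successor of a quad\<close>

text \<open>Moving one unit from a to b and c (or, if a = 1, passing to the next level)
  preserves the represented number and adds one to the size.\<close>
definition succ :: "quad \<Rightarrow> quad" where
  "succ q = (case q of (i, a, b, c) \<Rightarrow>
     if a \<ge> 2 then (i, a - 1, b + 1, c + 1) else (Suc i, b + 1, c + 1, 0))"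

lemma succ_ge2: "a \<ge> 2 \<Longrightarrow> succ (i, a, b, c) = (i, a - 1, b + 1, c + 1)"
  and succ_lt2: "\<not> a \<ge> 2 \<Longrightarrow> succ (i, a, b, c) = (Suc i, b + 1, c + 1, 0)"
  unfolding succ_def by simp_all

lemma succ_step:
  assumes "is_quad q"
  shows "is_quad (succ q) \<and> qsize (succ q) = Suc (qsize q)
    \<and> d1 (succ q) = d1 q + 2 * f (int (fst q) - 1) \<and> d2 (succ q) = d2 q + 2 * f (int (fst q))"
proof -
  obtain i a b c where qq: "q = (i, a, b, c)" by (cases q) auto
  have a1: "a \<ge> 1" using assms unfolding qq is_quad_def by simp
  have r0: "f (int i) = f (int i - 1) + f (int i - 2)" by (rule f_rec')
  have r1: "f (int i + 1) = f (int i) + f (int i - 1)" using f_rec'[of "int i + 1"] by simp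
  show ?thesis
  proof (cases "a \<ge> 2")
    case True
    have ia: "int (a - 1) = int a - 1" using True by simp
    show ?thesis unfolding qq succ_ge2[OF True] using True r0 r1
      by (simp add: is_quad_def qsize_def d1_def d2_def ia algebra_simps)
  next
    case False
    then have a: "a = 1" using a1 by simp
    have e: "int (Suc i) - 2 = int i - 1" "int (Suc i) - 1 = int i" "int (Suc i) = int i + 1"
      by simp_all
    show ?thesis unfolding qq succ_lt2[OF False] using r0 r1
      by (simp add: is_quad_def qsize_def d1_def d2_def e a del: of_nat_Suc, simp add: algebra_simps)
  qed
qed

lemma succ_iter:
  assumes "is_quad q"
  shows "is_quad ((succ ^^ k) q) \<and> qsize ((succ ^^ k) q) = qsize q + k
    \<and> d1 q \<le> d1 ((succ ^^ k) q) \<and> d2 q + 2 * int k \<le> d2 ((succ ^^ k) q)"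
proof (induction k)
  case 0
  then show ?case using assms by simp
next
  case (Suc k)
  let ?p = "(succ ^^ k) q"
  have "is_quad ?p" using Suc by blast
  moreover have "f (int (fst ?p) - 1) \<ge> 0" "f (int (fst ?p)) \<ge> 1"
    by (simp_all add: f_nonneg f_pos)
  ultimately show ?case using Suc succ_step[of ?p] by simp
qed

definition orbit :: "quad \<Rightarrow> quad set" where
  "orbit q0 = range (\<lambda>k. (succ ^^ k) q0)"

lemma orbit_qsize_inj:
  assumes "is_quad q0"
  shows "inj_on qsize (orbit q0)"
proof (rule inj_onI)
  fix q q' assume "q \<in> orbit q0" "q' \<in> orbit q0" and eq: "qsize q = qsize q'"
  then obtain k l where k: "q = (succ ^^ k) q0" and l: "q' = (succ ^^ l) q0"
    unfolding orbit_def by blast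
  have "k = l" using eq succ_iter[OF assms] unfolding k l by simp
  then show "q = q'" unfolding k l by simp
qed

lemma orbit_qsize_image:
  assumes "is_quad q0"
  shows "qsize ` orbit q0 = {qsize q0..}"
proof -
  have "qsize ` orbit q0 = (\<lambda>k. qsize q0 + k) ` UNIV"
    using succ_iter[OF assms] unfolding orbit_def image_image by simp
  also have "\<dots> = {qsize q0..}" by (auto simp: le_iff_add)
  finally show ?thesis .
qed

text \<open>Along an orbit, a larger size means a later element, hence larger degrees.\<close>
lemma orbit_degrees_mono:
  assumes q0: "is_quad q0" and q: "q \<in> orbit q0" and q': "q' \<in> orbit q0"
    and lt: "qsize q < qsize q'"
  shows "deg q < deg q'
       \<and> (d1 q \<le> d1 q' \<and> d2 q \<le> d2 q' \<and> (d1 q, d2 q) \<noteq> (d1 q', d2 q'))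
       \<and> d2 q < d2 q'"
proof -
  obtain k l where k: "q = (succ ^^ k) q0" and l: "q' = (succ ^^ l) q0"
    using q q' unfolding orbit_def by blast
  have "k < l" using lt succ_iter[OF q0] unfolding k l by simp
  then have "q' = (succ ^^ ((l - k) + k)) q0" unfolding l by simp
  then have "q' = (succ ^^ (l - k)) q" unfolding k funpow_add by simp
  moreover have "is_quad q" using succ_iter[OF q0] unfolding k by blast
  ultimately have "d1 q \<le> d1 q'" "d2 q + 2 * int (l - k) \<le> d2 q'"
    using succ_iter[of q "l - k"] by simp_all
  then show ?thesis using \<open>k < l\<close> unfolding deg_def by auto
qed

lemma orbit_min_size:
  assumes "is_quad q0" "q \<in> orbit q0" "qsize q \<le> qsize q0"
  shows "q = q0"
  using assms succ_iter[OF assms(1)] unfolding orbit_def by auto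

section \<open>Q alpha is the orbit of its base quad\<close>

lemma succ_in_Q:
  assumes ax: "\<alpha> = real_of_int m + of_int n * ginv" and q: "q \<in> Q \<alpha>"
  shows "succ q \<in> Q \<alpha>"
proof -
  obtain i a b c where qq: "q = (i, a, b, c)" by (cases q) auto
  have h: "a \<ge> 1" "int a + int c = coefA m n i" "int b - int c = coefB m n i"
    using q unfolding qq Q_iff[OF ax] by auto
  show ?thesis
  proof (cases "a \<ge> 2")
    case True
    then show ?thesis unfolding qq succ_ge2[OF True] Q_iff[OF ax] using h by auto
  next
    case False
    then show ?thesis unfolding qq succ_lt2[OF False] Q_iff[OF ax] using h
      by (simp add: coefA_Suc coefB_Suc)
  qed
qed

text \<open>A quad is a base quad if it has no predecessor: b = 0, or i = c = 0.\<close>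
definition base :: "quad \<Rightarrow> bool" where
  "base q = (case q of (i, a, b, c) \<Rightarrow> b = 0 \<or> (i = 0 \<and> c = 0))"

lemma pred_in_Q:
  assumes ax: "\<alpha> = real_of_int m + of_int n * ginv" and q: "q \<in> Q \<alpha>" and nb: "\<not> base q"
  shows "\<exists>p\<in>Q \<alpha>. succ p = q"
proof -
  obtain i a b c where qq: "q = (i, a, b, c)" by (cases q) auto
  have h: "a \<ge> 1" "int a + int c = coefA m n i" "int b - int c = coefB m n i"
    using q unfolding qq Q_iff[OF ax] by auto
  have b1: "b \<ge> 1" and ic: "i \<noteq> 0 \<or> c \<noteq> 0" using nb unfolding qq base_def by auto
  show ?thesis
  proof (cases "c \<ge> 1")
    case True
    have "succ (i, a + 1, b - 1, c - 1) = q" unfolding qq using True b1 h(1) by (simp add: succ_ge2)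
    moreover have "(i, a + 1, b - 1, c - 1) \<in> Q \<alpha>" unfolding Q_iff[OF ax] using h True b1 by auto
    ultimately show ?thesis by blast
  next
    case False
    with ic obtain j where j: "i = Suc j" by (cases i) auto
    have "succ (j, 1, a - 1, b - 1) = q" unfolding qq using h b1 False j by (simp add: succ_lt2)
    moreover have "(j, 1, a - 1, b - 1) \<in> Q \<alpha>" unfolding Q_iff[OF ax]
      using h b1 False j by (auto simp: coefA_Suc coefB_Suc)
    ultimately show ?thesis by blast
  qed
qed

lemma descends_to_base:
  assumes ax: "\<alpha> = real_of_int m + of_int n * ginv" and q: "q \<in> Q \<alpha>"
  shows "\<exists>p\<in>Q \<alpha>. base p \<and> q \<in> orbit p"
  using q
proof (induction "qsize q" arbitrary: q rule: less_induct)
  case less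
  show ?case
  proof (cases "base q")
    case True
    have "q = (succ ^^ 0) q" by simp
    then show ?thesis using True less.prems unfolding orbit_def by blast
  next
    case False
    then obtain p where p: "p \<in> Q \<alpha>" "succ p = q" using pred_in_Q[OF ax less.prems] by blast
    have "qsize p < qsize q" using succ_step[of p] p unfolding Q_def by simp
    then obtain r k where "r \<in> Q \<alpha>" "base r" "p = (succ ^^ k) r"
      using less.hyps p(1) unfolding orbit_def by blast
    moreover have "q = (succ ^^ Suc k) r" using p(2) \<open>p = (succ ^^ k) r\<close> by simp
    ultimately show ?thesis unfolding orbit_def by blast
  qed
qed

text \<open>At the level i of a base quad, A_i = a + c and A_(i+1) = a + b are both positive.\<close>
lemma base_level_pos:
  assumes ax: "\<alpha> = real_of_int m + of_int n * ginv"
    and q: "(i, a, b, c) \<in> Q \<alpha>" and bs: "base (i, a, b, c)"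
  shows "coefA m n i \<ge> 1 \<and> coefA m n (Suc i) \<ge> 1"
  using q bs unfolding Q_iff[OF ax] base_def coefA_Suc by auto

text \<open>Base quads share their level: above the level i of one base quad all A-coordinates
  stay positive, so B_j = A_(j-1) > 0 for j > i, whereas a base quad at level j > 0 has
  b = 0 and hence B_j = -c \<le> 0.\<close>
lemma base_level_unique:
  assumes ax: "\<alpha> = real_of_int m + of_int n * ginv"
    and q: "(i, a, b, c) \<in> Q \<alpha>" "base (i, a, b, c)"
    and q': "(j, a', b', c') \<in> Q \<alpha>" "base (j, a', b', c')"
  shows "\<not> i < j"
proof
  assume lt: "i < j"
  then obtain k where j: "j = Suc k" and "i \<le> k" by (cases j) auto
  then have "coefA m n (i + (k - i)) \<ge> 1"
    using coefA_stays_pos base_level_pos[OF ax q] by blast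
  then have "coefB m n j \<ge> 1" using \<open>i \<le> k\<close> j by (simp add: coefB_Suc)
  moreover have "b' = 0" using q'(2) j unfolding base_def by simp
  ultimately show False using q'(1) unfolding Q_iff[OF ax] by simp
qed

lemma base_unique:
  assumes ax: "\<alpha> = real_of_int m + of_int n * ginv"
    and q: "q \<in> Q \<alpha>" "base q" and q': "q' \<in> Q \<alpha>" "base q'"
  shows "q = q'"
proof -
  obtain i a b c where qq: "q = (i, a, b, c)" by (cases q) auto
  obtain j a' b' c' where qq': "q' = (j, a', b', c')" by (cases q') auto
  have "i = j" using base_level_unique[OF ax] q q' unfolding qq qq' by (meson linorder_neqE)
  then show ?thesis using q q' unfolding qq qq' Q_iff[OF ax] base_def by auto
qed

lemma Q_is_orbit:
  assumes ax: "\<alpha> = real_of_int m + of_int n * ginv" and pos: "\<alpha> > 0"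
  obtains q0 where "q0 \<in> Q \<alpha>" "base q0" "Q \<alpha> = orbit q0"
proof -
  obtain q1 where "q1 \<in> Q \<alpha>" using Q_nonempty[OF ax pos] by blast
  then obtain q0 where q0: "q0 \<in> Q \<alpha>" "base q0" using descends_to_base[OF ax] by blast
  have "q \<in> orbit q0" if "q \<in> Q \<alpha>" for q
    using descends_to_base[OF ax that] base_unique[OF ax _ _ q0] by blast
  moreover have "(succ ^^ k) q0 \<in> Q \<alpha>" for k
    by (induction k) (simp_all add: q0(1) succ_in_Q[OF ax])
  ultimately have "Q \<alpha> = orbit q0" unfolding orbit_def by blast
  then show ?thesis using that q0 by blast
qed

text \<open>The base quad has bi-degree (|m|, |n|).  If b = 0, then
  alpha = a x^i + c x^(i+2) expands (lemma ginv_power_f) to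
  (-1)^i (d1 - d2 x); if i = c = 0, then alpha = a + b x directly.\<close>
lemma base_bidegree:
  assumes ax: "\<alpha> = real_of_int m + of_int n * ginv"
    and q: "(i, a, b, c) \<in> Q \<alpha>" and bs: "base (i, a, b, c)"
  shows "d1 (i, a, b, c) = \<bar>m\<bar> \<and> d2 (i, a, b, c) = \<bar>n\<bar>"
proof (cases "b = 0")
  case True
  define M N where "M = int a * f (int i - 2) + int c * f (int i)"
    and "N = int a * f (int i - 1) + int c * f (int i + 1)"
  have "represents (i, a, b, c) \<alpha>" using q unfolding Q_def by simp
  then have rep: "\<alpha> = real a * ginv ^ i + real c * ginv ^ Suc (Suc i)"
    unfolding represents_iff True by simp
  have x2: "ginv ^ Suc (Suc i) = (-1) ^ i * (of_int (f (int i)) - of_int (f (int i + 1)) * ginv)"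
    using ginv_power_f[of "Suc (Suc i)"] by (simp add: add.commute)
  have "\<alpha> = of_int ((-1) ^ i * M) + of_int (- ((-1) ^ i * N)) * ginv"
    unfolding rep x2 ginv_power_f[of i] M_def N_def by (simp add: algebra_simps)
  then have mn: "m = (-1) ^ i * M \<and> n = - ((-1) ^ i * N)"
    using ax by (intro Zgamma_coords_unique) simp
  have "M \<ge> 0" "N \<ge> 0" unfolding M_def N_def by (simp_all add: f_nonneg)
  then have "\<bar>m\<bar> = M" "\<bar>n\<bar> = N" using mn by (simp_all add: abs_mult power_abs)
  then show ?thesis using True unfolding d1_def d2_def M_def N_def by simp
next
  case False
  then have ic: "i = 0" "c = 0" using bs unfolding base_def by auto
  have "represents (i, a, b, c) \<alpha>" using q unfolding Q_def by simp
  then have "real_of_int m + of_int n * ginv = of_int (int a) + of_int (int b) * ginv"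
    using ax unfolding represents_iff ic by simp
  then have "m = int a \<and> n = int b" by (rule Zgamma_coords_unique)
  then show ?thesis using ic unfolding d1_def d2_def by (simp add: f_0 f_m1 f_m2)
qed

theorem mainTheorem16:
  fixes m n :: int and \<alpha> :: real
  assumes alpha_def: "\<alpha> = real_of_int m + real_of_int n * gamma powi (-1)"
    and pos: "\<alpha> > 0"
  shows "infinite (Q \<alpha>)
       \<and> inj_on qsize (Q \<alpha>)
       \<and> (\<exists>s0. qsize ` Q \<alpha> = {s0..})
       \<and> (\<forall>q\<in>Q \<alpha>. \<forall>q'\<in>Q \<alpha>. qsize q < qsize q' \<longrightarrow>
            deg q < deg q'
          \<and> (d1 q \<le> d1 q' \<and> d2 q \<le> d2 q' \<and> (d1 q, d2 q) \<noteq> (d1 q', d2 q'))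
          \<and> d2 q < d2 q')
       \<and> (\<forall>q\<in>Q \<alpha>. (\<forall>q'\<in>Q \<alpha>. qsize q \<le> qsize q') \<longrightarrow>
            deg q = \<bar>m\<bar> + \<bar>n\<bar> \<and> (d1 q, d2 q) = (\<bar>m\<bar>, \<bar>n\<bar>))"
proof -
  have ax: "\<alpha> = real_of_int m + of_int n * ginv"
    using alpha_def by (simp add: power_int_minus1_right inverse_gamma)
  obtain q0 where q0: "q0 \<in> Q \<alpha>" "base q0" and Q_eq: "Q \<alpha> = orbit q0"
    using Q_is_orbit[OF ax pos] by blast
  have quad: "is_quad q0" using q0(1) unfolding Q_def by simp
  have sizes: "qsize ` Q \<alpha> = {qsize q0..}"
    unfolding Q_eq by (rule orbit_qsize_image[OF quad])
  then have "infinite (Q \<alpha>)" by (metis finite_imageI infinite_Ici)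
  moreover have "d1 q = \<bar>m\<bar> \<and> d2 q = \<bar>n\<bar>"
    if "q \<in> Q \<alpha>" "\<forall>q'\<in>Q \<alpha>. qsize q \<le> qsize q'" for q
  proof -
    have "q = q0" using orbit_min_size[OF quad] that q0(1) unfolding Q_eq by blast
    then show ?thesis using base_bidegree[OF ax] q0 by (cases q) blast
  qed
  ultimately show ?thesis
    using orbit_qsize_inj[OF quad] orbit_degrees_mono[OF quad] sizes
    unfolding Q_eq deg_def by auto
qed

end
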